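(* Let $G$ be a graph and let $C=v_0v_1\ldots v_{n-1}$ be an induced cycle of $G$ of length $n\ge 5$ with good neighbours. For $i=0,\dots,n-1$ let $B_i$ be a biclique of $G$ containing $\{v_{i-1},v_i,v_{i+1}\}$ (indices mod $n$), and let $b_i$ be the vertex of $KB_e(G)$ corresponding to $B_i$. Then $V(B_i)\subseteq N[v_i]$ for all $i$, $C'=b_0b_1\ldots b_{n-1}$ is an induced cycle (of length $n$) of $KB_e(G)$, and $C'$ has good neighbours in $KB_e(G)$.
   Context: All graphs are finite, simple and undirected. A biclique of a graph $G$ is a maximal (with respect to inclusion) induced subgraph of $G$ that is a complete bipartite graph $K_{p,q}$ with $p,q\ge 1$. The edge-biclique graph $KB_e(G)$ has one vertex for each biclique of $G$, two distinct vertices being adjacent iff the corresponding bicliques share at least one edge. An induced cycle $C=v_0v_1\ldots v_{n-1}$ ($n\ge5$) of a graph $H$ has good neighbours (in $H$) if for every vertex $v\in V(H)\setminus V(C)$ and every $i\in\{0,\dots,n-1\}$ (indices mod $n$), $\{v_{i-1},v_{i+1}\}\subseteq N(v)$ implies $v_i\in N(v)$. $N[v]$ is the closed neighbourhood of $v$. *)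

theory Defs
  imports Main
begin

definition graph :: "'a set \<Rightarrow> ('a \<Rightarrow> 'a \<Rightarrow> bool) \<Rightarrow> bool" where
  "graph V E \<longleftrightarrow> finite V \<and> (\<forall>x y. E x y \<longrightarrow> x \<in> V \<and> y \<in> V)
     \<and> (\<forall>x y. E x y \<longrightarrow> E y x) \<and> (\<forall>x. \<not> E x x)"

definition induces_complete_bipartite :: "'a set \<Rightarrow> ('a \<Rightarrow> 'a \<Rightarrow> bool) \<Rightarrow> 'a set \<Rightarrow> bool" where
  "induces_complete_bipartite V E S \<longleftrightarrow> S \<subseteq> V \<and>
     (\<exists>X Y. S = X \<union> Y \<and> X \<inter> Y = {} \<and> X \<noteq> {} \<and> Y \<noteq> {}
        \<and> (\<forall>x\<in>X. \<forall>y\<in>Y. E x y)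
        \<and> (\<forall>x\<in>X. \<forall>x'\<in>X. \<not> E x x')
        \<and> (\<forall>y\<in>Y. \<forall>y'\<in>Y. \<not> E y y'))"

definition biclique :: "'a set \<Rightarrow> ('a \<Rightarrow> 'a \<Rightarrow> bool) \<Rightarrow> 'a set \<Rightarrow> bool" where
  "biclique V E S \<longleftrightarrow> induces_complete_bipartite V E S \<and>
     (\<forall>T. induces_complete_bipartite V E T \<and> S \<subseteq> T \<longrightarrow> T = S)"

definition KBe_vertices :: "'a set \<Rightarrow> ('a \<Rightarrow> 'a \<Rightarrow> bool) \<Rightarrow> 'a set set" where
  "KBe_vertices V E = {S. biclique V E S}"

definition KBe_adj :: "'a set \<Rightarrow> ('a \<Rightarrow> 'a \<Rightarrow> bool) \<Rightarrow> 'a set \<Rightarrow> 'a set \<Rightarrow> bool" where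
  "KBe_adj V E S T \<longleftrightarrow> biclique V E S \<and> biclique V E T \<and> S \<noteq> T \<and>
     (\<exists>x y. E x y \<and> x \<in> S \<and> y \<in> S \<and> x \<in> T \<and> y \<in> T)"

definition closed_nbhd :: "('a \<Rightarrow> 'a \<Rightarrow> bool) \<Rightarrow> 'a \<Rightarrow> 'a set" where
  "closed_nbhd E v = insert v {u. E v u}"

definition induced_cycle :: "'a set \<Rightarrow> ('a \<Rightarrow> 'a \<Rightarrow> bool) \<Rightarrow> nat \<Rightarrow> (nat \<Rightarrow> 'a) \<Rightarrow> bool" where
  "induced_cycle V E n c \<longleftrightarrow> n \<ge> 3 \<and> (\<forall>i<n. c i \<in> V) \<and> inj_on c {..<n} \<and>
     (\<forall>i<n. \<forall>j<n. E (c i) (c j) \<longleftrightarrow> (j = (i + 1) mod n \<or> i = (j + 1) mod n))"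

definition good_neighbours :: "'a set \<Rightarrow> ('a \<Rightarrow> 'a \<Rightarrow> bool) \<Rightarrow> nat \<Rightarrow> (nat \<Rightarrow> 'a) \<Rightarrow> bool" where
  "good_neighbours V E n c \<longleftrightarrow>
     (\<forall>w \<in> V - c ` {..<n}. \<forall>i<n.
        E w (c ((i + n - 1) mod n)) \<and> E w (c ((i + 1) mod n)) \<longrightarrow> E w (c i))"

end

theory Submission
  imports Defs
begin

text \<open>Every complete bipartite set S through v(i-1), v i, v(i+1) is a star centred at v i:
the side of v i consists of common neighbours of v(i-1) and v(i+1), and by good neighbours
and n \<ge> 5 such a common neighbour is v i itself or adjacent to v i, which an independent side
forbids. Hence the B i are distinct stars whose edges all contain their centres, so B i and
B j share an edge exactly when v i v j is an edge of C. If a biclique T outside C' shares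
edges with B(i-1) and B(i+1), it contains v(i-1), v(i+1) and a leaf a of B(i-1); as v(i-1) and
v(i+1) are non-adjacent, they lie on one side of T, so a is a common neighbour of both and
must be v i, giving the common edge v(i-1) v i of T and B i.\<close>

abbreviation cyc_pred :: "nat \<Rightarrow> nat \<Rightarrow> nat" where
  "cyc_pred n i \<equiv> (i + n - 1) mod n"

abbreviation cyc_succ :: "nat \<Rightarrow> nat \<Rightarrow> nat" where
  "cyc_succ n i \<equiv> (i + 1) mod n"

abbreviation cyc_adjacent :: "nat \<Rightarrow> nat \<Rightarrow> nat \<Rightarrow> bool" where
  "cyc_adjacent n i j \<equiv> j = cyc_succ n i \<or> i = cyc_succ n j"

lemma Suc_mod_eq: "i < n \<Longrightarrow> Suc i mod n = (if Suc i = n then 0 else Suc i)"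
  by auto

lemma pred_mod_eq: "i < n \<Longrightarrow> (i + n - Suc 0) mod n = (if i = 0 then n - 1 else i - 1)"
  by (cases i) (simp_all add: add.commute[of _ n])

lemma cyc_succ_pred: "i < n \<Longrightarrow> cyc_succ n (cyc_pred n i) = i"
  by (auto simp add: Suc_mod_eq pred_mod_eq)

lemma cyc_pred_succ: "i < n \<Longrightarrow> cyc_pred n (cyc_succ n i) = i"
  by (auto simp add: Suc_mod_eq pred_mod_eq)

lemma cyc_neighbours_distinct:
  "3 \<le> n \<Longrightarrow> i < n \<Longrightarrow>
    cyc_pred n i \<noteq> i \<and> cyc_succ n i \<noteq> i \<and> cyc_pred n i \<noteq> cyc_succ n i"
  by (auto simp add: Suc_mod_eq pred_mod_eq)

lemma cyc_neighbours_not_adjacent: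
  "4 \<le> n \<Longrightarrow> i < n \<Longrightarrow> \<not> cyc_adjacent n (cyc_pred n i) (cyc_succ n i)"
  by (auto simp add: Suc_mod_eq pred_mod_eq split: if_splits)

lemma cyc_common_neighbour:
  assumes "5 \<le> n" "i < n" "j < n"
    and "cyc_adjacent n j (cyc_pred n i)" "cyc_adjacent n j (cyc_succ n i)"
  shows "j = i"
  using assms by (auto simp add: Suc_mod_eq pred_mod_eq split: if_splits)

definition is_star :: "('a \<Rightarrow> 'a \<Rightarrow> bool) \<Rightarrow> 'a \<Rightarrow> 'a set \<Rightarrow> bool" where
  "is_star E c S \<longleftrightarrow> c \<in> S \<and> (\<forall>y \<in> S - {c}. E c y) \<and> (\<forall>y \<in> S - {c}. \<forall>y' \<in> S - {c}. \<not> E y y')"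

lemma star_subset_closed_nbhd: "is_star E c S \<Longrightarrow> S \<subseteq> closed_nbhd E c"
  unfolding is_star_def closed_nbhd_def by blast

lemma star_edge_contains_centre:
  "is_star E c S \<Longrightarrow> E x y \<Longrightarrow> x \<in> S \<Longrightarrow> y \<in> S \<Longrightarrow> x = c \<or> y = c"
  unfolding is_star_def by blast

lemma star_centre_unique:
  assumes "is_star E c S" "is_star E c' S"
    and "x \<in> S" "y \<in> S" "x \<noteq> y" "x \<noteq> c" "y \<noteq> c"
  shows "c' = c"
  using assms unfolding is_star_def by blast

lemma star_shared_edge:
  assumes star: "is_star E c S" and sym: "\<And>x y. E x y \<Longrightarrow> E y x"
    and edge: "E x y" "x \<in> S" "y \<in> S" "x \<in> T" "y \<in> T"
  obtains a where "c \<in> T" "a \<in> S" "a \<in> T" "E c a"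
  using star_edge_contains_centre[OF star edge(1-3)] edge sym by blast

lemma complete_bipartite_obtain_sides:
  assumes "induces_complete_bipartite V E S"
  obtains X Y where "S = X \<union> Y" "X \<inter> Y = {}" "\<forall>x\<in>X. \<forall>y\<in>Y. E x y"
    "\<forall>x\<in>X. \<forall>x'\<in>X. \<not> E x x'" "\<forall>y\<in>Y. \<forall>y'\<in>Y. \<not> E y y'"
  using assms unfolding induces_complete_bipartite_def by blast

text \<open>Non-adjacent vertices of a complete bipartite set lie on a common side.\<close>

lemma complete_bipartite_adj_nonadj:
  assumes S: "induces_complete_bipartite V E S" and sym: "\<And>x y. E x y \<Longrightarrow> E y x"
    and "a \<in> S" "b \<in> S" "c \<in> S" "E a b" "\<not> E a c"
  shows "E b c"
proof -
  obtain X Y where XY: "S = X \<union> Y" "X \<inter> Y = {}" "\<forall>x\<in>X. \<forall>y\<in>Y. E x y"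
    "\<forall>x\<in>X. \<forall>x'\<in>X. \<not> E x x'" "\<forall>y\<in>Y. \<forall>y'\<in>Y. \<not> E y y'"
    using complete_bipartite_obtain_sides[OF S] .
  from XY(1) \<open>a \<in> S\<close> consider "a \<in> X" | "a \<in> Y" by blast
  then show ?thesis
  proof cases
    case 1
    then have "b \<in> Y" "c \<in> X" using XY assms(3-7) by blast+
    then show ?thesis using XY(3) sym by blast
  next
    case 2
    then have "b \<in> X" "c \<in> Y" using XY assms(3-7) sym by blast+
    then show ?thesis using XY(3) by blast
  qed
qed

lemma singleton_side:
  assumes complete: "\<forall>p\<in>X. \<forall>q\<in>Y. E p q" and indep: "\<forall>p\<in>X. \<forall>p'\<in>X. \<not> E p p'"
    and "x \<in> X" "a \<in> X \<union> Y" "b \<in> X \<union> Y" "E x a" "E x b"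
    and common: "\<forall>w\<in>X. E w a \<longrightarrow> E w b \<longrightarrow> w = x \<or> E w x"
  shows "X = {x}"
proof -
  have "a \<in> Y" "b \<in> Y" using assms(3-7) indep by blast+
  then have "\<forall>w\<in>X. w = x \<or> E w x" using common complete by blast
  then show ?thesis using indep \<open>x \<in> X\<close> by blast
qed

lemma star_of_singleton_side:
  assumes "S = {x} \<union> Y" "x \<notin> Y" "\<forall>q\<in>Y. E x q" "\<forall>q\<in>Y. \<forall>q'\<in>Y. \<not> E q q'"
  shows "is_star E x S"
  using assms unfolding is_star_def by blast

lemma complete_bipartite_star:
  assumes S: "induces_complete_bipartite V E S" and sym: "\<And>x y. E x y \<Longrightarrow> E y x"
    and x: "x \<in> S" and ab: "a \<in> S" "b \<in> S" "E x a" "E x b"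
    and common: "\<forall>w\<in>S. E w a \<longrightarrow> E w b \<longrightarrow> w = x \<or> E w x"
  shows "is_star E x S"
proof -
  obtain X Y where XY: "S = X \<union> Y" "X \<inter> Y = {}" "\<forall>p\<in>X. \<forall>q\<in>Y. E p q"
    "\<forall>p\<in>X. \<forall>p'\<in>X. \<not> E p p'" "\<forall>q\<in>Y. \<forall>q'\<in>Y. \<not> E q q'"
    using complete_bipartite_obtain_sides[OF S] .
  have ab': "a \<in> X \<union> Y" "b \<in> X \<union> Y" "a \<in> Y \<union> X" "b \<in> Y \<union> X"
    using ab XY(1) by auto
  have common': "\<forall>w\<in>X. E w a \<longrightarrow> E w b \<longrightarrow> w = x \<or> E w x"
    "\<forall>w\<in>Y. E w a \<longrightarrow> E w b \<longrightarrow> w = x \<or> E w x"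
    using common XY(1) by auto
  show ?thesis
  proof (cases "x \<in> X")
    case True
    have "X = {x}"
      using singleton_side[OF XY(3,4) True ab'(1,2) ab(3,4) common'(1)] .
    then show ?thesis
      using star_of_singleton_side[of S x Y E] XY by blast
  next
    case False
    then have "x \<in> Y" using x XY(1) by blast
    have YX: "\<forall>q\<in>Y. \<forall>p\<in>X. E q p" using XY(3) sym by blast
    have "Y = {x}"
      using singleton_side[OF YX XY(5) \<open>x \<in> Y\<close> ab'(3,4) ab(3,4) common'(2)] .
    then show ?thesis
      using star_of_singleton_side[of S x X E] XY YX by blast
  qed
qed

lemma good_cycle_common_neighbour:
  assumes cycle: "induced_cycle V E n v" and good: "good_neighbours V E n v"
    and "5 \<le> n" "i < n" "w \<in> V"
    and adj: "E w (v (cyc_pred n i))" "E w (v (cyc_succ n i))"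
  shows "w = v i \<or> E w (v i)"
proof (cases "w \<in> v ` {..<n}")
  case True
  then obtain j where j: "j < n" "w = v j" by auto
  have cyc: "\<And>a b. a < n \<Longrightarrow> b < n \<Longrightarrow> E (v a) (v b) \<longleftrightarrow> cyc_adjacent n a b"
    using cycle unfolding induced_cycle_def by blast
  have "cyc_pred n i < n" "cyc_succ n i < n" using \<open>5 \<le> n\<close> by simp_all
  then have "cyc_adjacent n j (cyc_pred n i)" "cyc_adjacent n j (cyc_succ n i)"
    using cyc[OF j(1)] adj[unfolded j(2)] by blast+
  then have "j = i" using cyc_common_neighbour \<open>5 \<le> n\<close> \<open>i < n\<close> j(1) by blast
  then show ?thesis using j(2) by simp
next
  case False
  with \<open>w \<in> V\<close> have "w \<in> V - v ` {..<n}" by blast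
  then show ?thesis using good \<open>i < n\<close> adj unfolding good_neighbours_def by blast
qed

locale good_cycle_bicliques =
  fixes V :: "'a set" and E :: "'a \<Rightarrow> 'a \<Rightarrow> bool"
    and n :: nat and v :: "nat \<Rightarrow> 'a" and B :: "nat \<Rightarrow> 'a set"
  assumes graph: "graph V E"
    and n_ge_5: "n \<ge> 5"
    and cycle: "induced_cycle V E n v"
    and good: "good_neighbours V E n v"
    and biclique_B: "\<And>i. i < n \<Longrightarrow> biclique V E (B i)"
    and cycle_in_B: "\<And>i. i < n \<Longrightarrow> {v (cyc_pred n i), v i, v (cyc_succ n i)} \<subseteq> B i"
begin

lemma sym: "E x y \<Longrightarrow> E y x" and irrefl: "\<not> E x x"
  using graph unfolding graph_def by blast+

lemma n_pos: "0 < n"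
  using n_ge_5 by simp

lemma cycle_adj_iff: "a < n \<Longrightarrow> b < n \<Longrightarrow> E (v a) (v b) \<longleftrightarrow> cyc_adjacent n a b"
  using cycle unfolding induced_cycle_def by blast

lemma cycle_inj: "a < n \<Longrightarrow> b < n \<Longrightarrow> v a = v b \<Longrightarrow> a = b"
  using cycle unfolding induced_cycle_def inj_on_def by blast

lemma cyc_pred_less: "cyc_pred n i < n" and cyc_succ_less: "cyc_succ n i < n"
  using n_pos by simp_all

lemma cycle_adj_neighbours: "i < n \<Longrightarrow> E (v i) (v (cyc_pred n i)) \<and> E (v i) (v (cyc_succ n i))"
  using cycle_adj_iff[OF _ cyc_pred_less] cycle_adj_iff[OF _ cyc_succ_less] cyc_succ_pred
  by metis

lemma star_B: "i < n \<Longrightarrow> is_star E (v i) (B i)"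
proof -
  assume i: "i < n"
  have S: "induces_complete_bipartite V E (B i)"
    using biclique_B[OF i] unfolding biclique_def by blast
  then have "B i \<subseteq> V" unfolding induces_complete_bipartite_def by blast
  then have "\<forall>w\<in>B i. E w (v (cyc_pred n i)) \<longrightarrow> E w (v (cyc_succ n i)) \<longrightarrow> w = v i \<or> E w (v i)"
    using good_cycle_common_neighbour[OF cycle good n_ge_5 i] by blast
  moreover have "v (cyc_pred n i) \<in> B i" "v i \<in> B i" "v (cyc_succ n i) \<in> B i"
    using cycle_in_B[OF i] by auto
  ultimately show ?thesis
    using complete_bipartite_star[OF S sym] cycle_adj_neighbours[OF i] by blast
qed

lemma cycle_neighbours_distinct:
  "i < n \<Longrightarrow> v (cyc_pred n i) \<noteq> v i \<and> v (cyc_succ n i) \<noteq> v i \<and> v (cyc_pred n i) \<noteq> v (cyc_succ n i)"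
  using cyc_neighbours_distinct[of n i] n_ge_5 cycle_inj[OF cyc_pred_less] cycle_inj[OF cyc_succ_less]
  by fastforce

lemma B_inj: "i < n \<Longrightarrow> j < n \<Longrightarrow> B i = B j \<Longrightarrow> i = j"
proof -
  assume i: "i < n" and j: "j < n" and eq: "B i = B j"
  have star_j: "is_star E (v j) (B i)" using star_B[OF j] eq by simp
  have "v j = v i"
    using star_centre_unique[OF star_B[OF i] star_j] cycle_in_B[OF i] cycle_neighbours_distinct[OF i]
    by blast
  then show "i = j" using cycle_inj i j by simp
qed

lemma KBe_adj_B_iff:
  assumes i: "i < n" and j: "j < n"
  shows "KBe_adj V E (B i) (B j) \<longleftrightarrow> cyc_adjacent n i j"
proof
  assume "KBe_adj V E (B i) (B j)"
  then obtain x y where ne: "B i \<noteq> B j"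
    and xy: "E x y" "x \<in> B i" "y \<in> B i" "x \<in> B j" "y \<in> B j"
    unfolding KBe_adj_def by blast
  have "v i \<noteq> v j" using ne cycle_inj[OF i j] by blast
  moreover have "x = v i \<or> y = v i" "x = v j \<or> y = v j"
    using star_edge_contains_centre[OF star_B[OF i] xy(1-3)]
      star_edge_contains_centre[OF star_B[OF j] xy(1,4,5)] .
  ultimately have "E (v i) (v j)" using xy(1) sym by blast
  then show "cyc_adjacent n i j" using cycle_adj_iff[OF i j] by blast
next
  assume adj: "cyc_adjacent n i j"
  then have "v j \<in> B i \<and> v i \<in> B j"
    using cycle_in_B[OF i] cycle_in_B[OF j] cyc_pred_succ[OF i] cyc_pred_succ[OF j] by auto
  moreover have "i \<noteq> j"
    using adj cyc_neighbours_distinct[of n i] cyc_neighbours_distinct[of n j] n_ge_5 i j by auto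
  then have "B i \<noteq> B j" using B_inj[OF i j] by blast
  moreover have "E (v i) (v j)" using cycle_adj_iff[OF i j] adj by blast
  ultimately show "KBe_adj V E (B i) (B j)"
    unfolding KBe_adj_def using biclique_B[OF i] biclique_B[OF j] star_B[OF i] star_B[OF j]
    unfolding is_star_def by blast
qed

lemma KBe_induced_cycle: "induced_cycle (KBe_vertices V E) (KBe_adj V E) n B"
proof -
  have "inj_on B {..<n}" using B_inj unfolding inj_on_def by blast
  moreover have "\<forall>i<n. B i \<in> KBe_vertices V E"
    unfolding KBe_vertices_def using biclique_B by blast
  ultimately show ?thesis unfolding induced_cycle_def using n_ge_5 KBe_adj_B_iff by simp
qed

lemma KBe_good_neighbours: "good_neighbours (KBe_vertices V E) (KBe_adj V E) n B"
  unfolding good_neighbours_def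
proof (intro ballI allI impI)
  fix T i assume T: "T \<in> KBe_vertices V E - B ` {..<n}" and i: "i < n"
    and adj: "KBe_adj V E T (B (cyc_pred n i)) \<and> KBe_adj V E T (B (cyc_succ n i))"
  define k where "k = cyc_pred n i"
  define s where "s = cyc_succ n i"
  have k: "k < n" and s: "s < n" using cyc_pred_less cyc_succ_less by (simp_all add: k_def s_def)
  have T_biclique: "biclique V E T" using T unfolding KBe_vertices_def by blast
  then have T_bip: "induces_complete_bipartite V E T" unfolding biclique_def by blast
  obtain x y where "E x y" "x \<in> B k" "y \<in> B k" "x \<in> T" "y \<in> T"
    using adj unfolding KBe_adj_def k_def by blast
  then obtain a where vk_T: "v k \<in> T" and a: "a \<in> B k" "a \<in> T" "E (v k) a"
    using star_shared_edge[OF star_B[OF k] sym] by blast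
  obtain x' y' where "E x' y'" "x' \<in> B s" "y' \<in> B s" "x' \<in> T" "y' \<in> T"
    using adj unfolding KBe_adj_def s_def by blast
  then have vs_T: "v s \<in> T"
    using star_shared_edge[OF star_B[OF s] sym] by blast
  have "\<not> E (v k) (v s)"
    using cycle_adj_iff[OF k s] cyc_neighbours_not_adjacent[OF _ i] n_ge_5
    unfolding k_def s_def by simp
  then have "E a (v s)" using complete_bipartite_adj_nonadj[OF T_bip sym vk_T a(2)] vs_T a(3)
    by blast
  moreover have "a \<in> V" using a(2) T_bip unfolding induces_complete_bipartite_def by blast
  ultimately have "a = v i \<or> E a (v i)"
    using good_cycle_common_neighbour[OF cycle good n_ge_5 i] sym[OF a(3)]
    unfolding k_def s_def by blast
  moreover have "v i \<in> B k" "v i \<noteq> v k"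
    using cycle_in_B[OF k] cyc_succ_pred[OF i] cycle_neighbours_distinct[OF i]
    unfolding k_def by auto
  moreover have "a \<noteq> v k" using a(3) irrefl by blast
  ultimately have "a = v i" using star_B[OF k] a(1) unfolding is_star_def by blast
  moreover have "v k \<in> B i" "T \<noteq> B i" using cycle_in_B[OF i] T i unfolding k_def by auto
  ultimately show "KBe_adj V E T (B i)"
    unfolding KBe_adj_def using T_biclique biclique_B[OF i] vk_T a star_B[OF i]
    unfolding is_star_def by blast
qed

end

theorem mainTheorem9:
  fixes V :: "'a set" and E :: "'a \<Rightarrow> 'a \<Rightarrow> bool"
    and n :: nat and v :: "nat \<Rightarrow> 'a" and B :: "nat \<Rightarrow> 'a set"
  assumes "graph V E"
    and "n \<ge> 5"
    and "induced_cycle V E n v"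
    and "good_neighbours V E n v"
    and "\<forall>i<n. biclique V E (B i)"
    and "\<forall>i<n. {v ((i + n - 1) mod n), v i, v ((i + 1) mod n)} \<subseteq> B i"
  shows "(\<forall>i<n. B i \<subseteq> closed_nbhd E (v i))
    \<and> induced_cycle (KBe_vertices V E) (KBe_adj V E) n B
    \<and> good_neighbours (KBe_vertices V E) (KBe_adj V E) n B"
proof -
  interpret good_cycle_bicliques V E n v B
    using assms by unfold_locales blast+
  show ?thesis
    using star_subset_closed_nbhd[OF star_B] KBe_induced_cycle KBe_good_neighbours by blast
qed

end
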